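(* Let $\eta>0$, $\beta\in\mathbb{R}$, and let $\widehat{\mathcal{L}}_1,\widehat{\mathcal{L}}_2\in\mathbb{R}^{N\times N}$ satisfy $\langle \widehat{\mathcal{L}}_i\mathbf{x},\mathbf{x}\rangle\le 0$ for all $\mathbf{x}\in\mathbb{R}^N$ ($i=1,2$) and $\langle \widehat{\mathcal{L}}_1\mathbf{w},\widehat{\mathcal{L}}_2\mathbf{w}\rangle\ge 0$ for all $\mathbf{w}\in\mathbb{R}^N$. With $\gamma_*:=\frac{\eta^2+\beta^2}{\eta}$ and $$\mathcal{P}_{\gamma_*}:=\left[\eta I-\widehat{\mathcal{L}}_2+\beta^2(\eta I-\widehat{\mathcal{L}}_1)^{-1}\right](\gamma_* I-\widehat{\mathcal{L}}_2)^{-1},$$ the smallest singular value satisfies $$s_{\min}(\mathcal{P}_{\gamma_*})=\min_{\mathbf{v}\neq\mathbf{0}}\frac{\|\mathcal{P}_{\gamma_*}\mathbf{v}\|}{\|\mathbf{v}\|}\ \ge\ \frac{\eta^2}{\eta^2+\beta^2}.$$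
   Context: $\langle\cdot,\cdot\rangle$ and $\|\cdot\|$ denote the Euclidean inner product and norm on $\mathbb{R}^N$. *)

theory Defs
  imports "HOL-Analysis.Analysis"
begin

text \<open>Smallest singular value of a square real matrix, as in the paper:
  s_min(P) = min over v \<noteq> 0 of ||P v|| / ||v||.  (The minimum is attained,
  so it coincides with the infimum used here.)\<close>
definition s_min :: "real^'n^'n \<Rightarrow> real" where
  "s_min P = Inf {norm (P *v v) / norm v | v. v \<noteq> 0}"

end

theory Submission
  imports Defs
begin

text \<open>Substitute \<open>v = (\<gamma>\<^sub>* I - L\<^sub>2) u\<close> and \<open>u = (\<eta> I - L\<^sub>1) w\<close>, so that
  \<open>p = \<P>\<^sub>\<gamma>\<^sub>* v = (\<eta> I - L\<^sub>2) u + \<beta>\<^sup>2 w\<close>. With \<open>q = L\<^sub>1 w\<close> one finds \<open>v = p - (\<beta>\<^sup>2/\<eta>) q\<close>,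
  and expanding \<open>\<langle>p, q\<rangle>\<close> every term except \<open>-\<eta> \<parallel>q\<parallel>\<^sup>2\<close> is nonpositive by the
  hypotheses, so \<open>\<eta> \<parallel>q\<parallel> \<le> \<parallel>p\<parallel>\<close> by Cauchy-Schwarz. Hence
  \<open>\<parallel>v\<parallel> \<le> (1 + \<beta>\<^sup>2/\<eta>\<^sup>2) \<parallel>p\<parallel>\<close>, which is the claimed bound.\<close>

lemma inner_resolvent_le:
  fixes L1 L2 :: "'a::real_inner \<Rightarrow> 'a" and w :: 'a and \<eta> \<beta> :: real
  assumes "\<eta> > 0" "linear L2"
    and L1: "\<And>x. L1 x \<bullet> x \<le> 0"
    and L2: "\<And>x. L2 x \<bullet> x \<le> 0"
    and L12: "\<And>x. L1 x \<bullet> L2 x \<ge> 0"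
  defines "u \<equiv> \<eta> *\<^sub>R w - L1 w"
  shows "(\<eta> *\<^sub>R u - L2 u + \<beta>\<^sup>2 *\<^sub>R w) \<bullet> L1 w \<le> - \<eta> * (L1 w \<bullet> L1 w)"
proof -
  define q where "q = L1 w"
  have "(\<eta> *\<^sub>R u - L2 u + \<beta>\<^sup>2 *\<^sub>R w) \<bullet> q
      = (\<eta>\<^sup>2 + \<beta>\<^sup>2) * (q \<bullet> w) - \<eta> * (q \<bullet> q) - \<eta> * (q \<bullet> L2 w) + L2 q \<bullet> q"
    unfolding u_def q_def
    by (simp add: linear_diff[OF \<open>linear L2\<close>] linear_scale[OF \<open>linear L2\<close>]
        inner_diff_left inner_add_left power2_eq_square algebra_simps inner_commute)
  moreover have "(\<eta>\<^sup>2 + \<beta>\<^sup>2) * (q \<bullet> w) \<le> 0"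
    using L1[of w] unfolding q_def by (simp add: mult_nonneg_nonpos)
  moreover have "\<eta> * (q \<bullet> L2 w) \<ge> 0"
    using L12[of w] \<open>\<eta> > 0\<close> unfolding q_def by simp
  ultimately show ?thesis
    using L2[of q] unfolding q_def by linarith
qed

lemma resolvent_norm_bound:
  fixes L1 L2 :: "'a::real_inner \<Rightarrow> 'a" and w :: 'a and \<eta> \<beta> :: real
  assumes "\<eta> > 0" "linear L2"
    and "\<And>x. L1 x \<bullet> x \<le> 0"
    and "\<And>x. L2 x \<bullet> x \<le> 0"
    and "\<And>x. L1 x \<bullet> L2 x \<ge> 0"
  defines "u \<equiv> \<eta> *\<^sub>R w - L1 w"
  shows "\<eta>\<^sup>2 * norm (((\<eta>\<^sup>2 + \<beta>\<^sup>2) / \<eta>) *\<^sub>R u - L2 u)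
           \<le> (\<eta>\<^sup>2 + \<beta>\<^sup>2) * norm (\<eta> *\<^sub>R u - L2 u + \<beta>\<^sup>2 *\<^sub>R w)"
proof -
  define p where "p = \<eta> *\<^sub>R u - L2 u + \<beta>\<^sup>2 *\<^sub>R w"
  define q where "q = L1 w"
  define v where "v = ((\<eta>\<^sup>2 + \<beta>\<^sup>2) / \<eta>) *\<^sub>R u - L2 u"
  have "v = p + (\<beta>\<^sup>2 / \<eta>) *\<^sub>R u - \<beta>\<^sup>2 *\<^sub>R w"
    using \<open>\<eta> > 0\<close> unfolding v_def p_def
    by (simp add: add_divide_distrib power2_eq_square algebra_simps)
  also have "\<dots> = p - (\<beta>\<^sup>2 / \<eta>) *\<^sub>R q"
    using \<open>\<eta> > 0\<close> unfolding u_def q_def by (simp add: algebra_simps)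
  finally have v_eq: "v = p - (\<beta>\<^sup>2 / \<eta>) *\<^sub>R q" .
  have "\<eta> * (norm q * norm q) \<le> - (p \<bullet> q)"
    using inner_resolvent_le[OF assms(1-5), where w = w and \<beta> = \<beta>]
    unfolding p_def q_def u_def by (simp add: dot_square_norm power2_eq_square)
  also have "\<dots> \<le> norm p * norm q"
    using Cauchy_Schwarz_ineq2[of p q] by linarith
  finally have "\<eta> * norm q \<le> norm p"
    by (cases "q = 0") (auto simp: mult.assoc[symmetric])
  then have q_bound: "\<eta>\<^sup>2 * ((\<beta>\<^sup>2 / \<eta>) * norm q) \<le> \<beta>\<^sup>2 * norm p"
    using \<open>\<eta> > 0\<close> mult_left_mono[of "\<eta> * norm q" "norm p" "\<beta>\<^sup>2"]
    by (simp add: power2_eq_square mult_ac)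
  have "norm v \<le> norm p + (\<beta>\<^sup>2 / \<eta>) * norm q"
    using norm_triangle_ineq4[of p "(\<beta>\<^sup>2 / \<eta>) *\<^sub>R q"] \<open>\<eta> > 0\<close> unfolding v_eq by simp
  then have "\<eta>\<^sup>2 * norm v \<le> \<eta>\<^sup>2 * (norm p + (\<beta>\<^sup>2 / \<eta>) * norm q)"
    by (rule mult_left_mono) simp
  also have "\<dots> = \<eta>\<^sup>2 * norm p + \<eta>\<^sup>2 * ((\<beta>\<^sup>2 / \<eta>) * norm q)"
    by (rule distrib_left)
  also have "\<dots> \<le> (\<eta>\<^sup>2 + \<beta>\<^sup>2) * norm p"
    using q_bound by (simp add: distrib_right)
  finally show ?thesis
    unfolding v_def p_def .
qed

lemma matrix_vector_mult_scaleR_mat_1_minus: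
  fixes L :: "real^'n^'n"
  shows "(c *\<^sub>R mat 1 - L) *v x = c *\<^sub>R x - L *v x"
  by (simp add: matrix_vector_mult_diff_rdistrib flip: scaleR_matrix_vector_assoc)

lemma invertible_scaleR_mat_1_minus:
  fixes L :: "real^'n^'n"
  assumes "c > 0" and L: "\<And>x. (L *v x) \<bullet> x \<le> 0"
  shows "invertible (c *\<^sub>R mat 1 - L)"
  unfolding invertible_left_inverse matrix_left_invertible_ker
proof (intro allI impI)
  fix x :: "real^'n"
  assume "(c *\<^sub>R mat 1 - L) *v x = 0"
  then have "c *\<^sub>R x = L *v x"
    by (simp add: matrix_vector_mult_scaleR_mat_1_minus)
  then have "c * (x \<bullet> x) = (L *v x) \<bullet> x"
    by (metis inner_scaleR_left)
  with L[of x] have "c * (x \<bullet> x) \<le> 0"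
    by linarith
  with \<open>c > 0\<close> have "x \<bullet> x \<le> 0"
    by (simp add: mult_le_0_iff)
  then show "x = 0"
    by (metis inner_eq_zero_iff inner_ge_zero order_antisym)
qed

lemma matrix_inv_right:
  fixes A :: "'a::semiring_1^'n^'n"
  assumes "invertible A"
  shows "A ** matrix_inv A = mat 1"
  using someI_ex[OF assms[unfolded invertible_def]] unfolding matrix_inv_def by blast

lemma le_s_minI:
  fixes P :: "real^'n^'n"
  assumes "\<And>v. c * norm v \<le> norm (P *v v)"
  shows "c \<le> s_min P"
  unfolding s_min_def
proof (rule cInf_greatest)
  show "{norm (P *v v) / norm v | v. v \<noteq> 0} \<noteq> {}"
    using axis_eq_0_iff[of undefined "1::real"] by blast
qed (use assms in \<open>auto simp: pos_le_divide_eq\<close>)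

lemma scaleR_mat_1_minus_matrix_inv_apply:
  fixes L :: "real^'n^'n"
  assumes "c > 0" and "\<And>x. (L *v x) \<bullet> x \<le> 0"
  shows "(c *\<^sub>R mat 1 - L) *v (matrix_inv (c *\<^sub>R mat 1 - L) *v x) = x"
  by (simp add: matrix_vector_mul_assoc matrix_inv_right invertible_scaleR_mat_1_minus assms)

lemma preconditioner_norm_lower_bound:
  fixes L1 L2 :: "real^'n^'n" and \<eta> \<beta> :: real
  assumes "\<eta> > 0"
    and L1: "\<And>x. (L1 *v x) \<bullet> x \<le> 0"
    and L2: "\<And>x. (L2 *v x) \<bullet> x \<le> 0"
    and "\<And>w. (L1 *v w) \<bullet> (L2 *v w) \<ge> 0"
  defines "\<gamma> \<equiv> (\<eta>^2 + \<beta>^2) / \<eta>"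
  defines "P \<equiv> (\<eta> *\<^sub>R mat 1 - L2 + \<beta>^2 *\<^sub>R matrix_inv (\<eta> *\<^sub>R mat 1 - L1))
                ** matrix_inv (\<gamma> *\<^sub>R mat 1 - L2)"
  shows "\<eta>^2 / (\<eta>^2 + \<beta>^2) * norm v \<le> norm (P *v v)"
proof -
  have "\<gamma> > 0"
    using \<open>\<eta> > 0\<close> unfolding \<gamma>_def by (simp add: add_pos_nonneg)
  define u where "u = matrix_inv (\<gamma> *\<^sub>R mat 1 - L2) *v v"
  define w where "w = matrix_inv (\<eta> *\<^sub>R mat 1 - L1) *v u"
  have u: "u = \<eta> *\<^sub>R w - L1 *v w" and v: "v = \<gamma> *\<^sub>R u - L2 *v u"
    using scaleR_mat_1_minus_matrix_inv_apply[OF \<open>\<eta> > 0\<close> L1]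
      scaleR_mat_1_minus_matrix_inv_apply[OF \<open>\<gamma> > 0\<close> L2]
    unfolding u_def w_def by (simp_all add: matrix_vector_mult_scaleR_mat_1_minus)
  have "P *v v = \<eta> *\<^sub>R u - L2 *v u + \<beta>\<^sup>2 *\<^sub>R w"
    by (simp add: P_def u_def w_def matrix_vector_mul_assoc[symmetric]
        matrix_vector_mult_add_rdistrib matrix_vector_mult_scaleR_mat_1_minus
        flip: scaleR_matrix_vector_assoc)
  moreover have "\<eta>^2 * norm v \<le> (\<eta>^2 + \<beta>^2) * norm (\<eta> *\<^sub>R u - L2 *v u + \<beta>\<^sup>2 *\<^sub>R w)"
    using resolvent_norm_bound[OF \<open>\<eta> > 0\<close> matrix_vector_mul_linear assms(2-4),
        where w = w and \<beta> = \<beta>]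
    unfolding v u \<gamma>_def .
  moreover have "\<eta>^2 + \<beta>^2 > 0"
    using \<open>\<eta> > 0\<close> by (simp add: add_pos_nonneg)
  ultimately show ?thesis
    by (simp add: pos_divide_le_eq mult.commute)
qed

theorem mainTheorem4:
  fixes L1 L2 :: "real^'n^'n" and \<eta> \<beta> :: real
  assumes "\<eta> > 0"
    and "\<And>x. (L1 *v x) \<bullet> x \<le> 0"
    and "\<And>x. (L2 *v x) \<bullet> x \<le> 0"
    and "\<And>w. (L1 *v w) \<bullet> (L2 *v w) \<ge> 0"
  shows "s_min ((\<eta> *\<^sub>R mat 1 - L2 + \<beta>^2 *\<^sub>R matrix_inv (\<eta> *\<^sub>R mat 1 - L1))
                 ** matrix_inv (((\<eta>^2 + \<beta>^2) / \<eta>) *\<^sub>R mat 1 - L2))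
         \<ge> \<eta>^2 / (\<eta>^2 + \<beta>^2)"
  using preconditioner_norm_lower_bound[OF assms] by (rule le_s_minI)

end
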